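(* Let $d\ge1$, $L>0$, $N\ge1$ an integer, and let $p:[0,L]^d\to[0,\infty)$ be a probability density function that is Lipschitz continuous (w.r.t. the Euclidean norm) with constant $\ell_p$ and satisfies $p(x)>0$ for some $x\in\mathbb{X}_N^d$. Let $f:[0,L]^d\to\mathbb{R}$ be bounded and Lipschitz continuous with constant $\ell_f$, and write $\|f\|_{\mathsf{L}^\infty}=\sup_x|f(x)|$. Then $$|\mu(p)-\mu(\bar p_N)|\le 2\|f\|_{\mathsf{L}^\infty}\frac{\ell_p\sqrt d\,L^{d+1}}{N}+\ell_f\sqrt d\,\frac LN,$$ $$|\sigma^2(p)-\sigma^2(\bar p_N)|\le 6\|f\|_{\mathsf{L}^\infty}^2\frac{\ell_p\sqrt d\,L^{d+1}}{N}+4\|f\|_{\mathsf{L}^\infty}\ell_f\sqrt d\,\frac LN.$$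
   Context: $\mathbb{X}_N=\frac{L}{N}\{0,1,\dots,N-1\}$ and $\mathbb{X}_N^d\subset[0,L]^d$ is the uniform grid. The discretization $\bar p_N:\mathbb{X}_N^d\to[0,1]$ of $p$ is $\bar p_N(x)=p(x)/S$ with $S=\sum_{x\in\mathbb{X}_N^d}p(x)$. For a distribution $Q$ (a density on $[0,L]^d$ or a probability mass function on $\mathbb{X}_N^d$), $\mu(Q)=\mathbb{E}_{x\sim Q}[f(x)]$, $m_2(Q)=\mathbb{E}_{x\sim Q}[f(x)^2]$ and $\sigma^2(Q)=m_2(Q)-\mu(Q)^2$. *)

theory Defs
  imports "HOL-Analysis.Analysis"
begin

text \<open>The cube [0,L]^d, with d = CARD('n).\<close>
definition cube :: "real \<Rightarrow> (real ^ 'n) set" where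
  "cube L = cbox 0 (\<chi> i. L)"

definition grid :: "real \<Rightarrow> nat \<Rightarrow> (real ^ 'n) set" where
  "grid L N = {x. \<forall>i. \<exists>k<N. x $ i = L / real N * real k}"

definition mu_cont :: "real \<Rightarrow> (real ^ 'n \<Rightarrow> real) \<Rightarrow> (real ^ 'n \<Rightarrow> real) \<Rightarrow> real" where
  "mu_cont L p f = integral (cube L) (\<lambda>x. f x * p x)"

definition m2_cont :: "real \<Rightarrow> (real ^ 'n \<Rightarrow> real) \<Rightarrow> (real ^ 'n \<Rightarrow> real) \<Rightarrow> real" where
  "m2_cont L p f = integral (cube L) (\<lambda>x. (f x)^2 * p x)"

definition var_cont :: "real \<Rightarrow> (real ^ 'n \<Rightarrow> real) \<Rightarrow> (real ^ 'n \<Rightarrow> real) \<Rightarrow> real" where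
  "var_cont L p f = m2_cont L p f - (mu_cont L p f)^2"

definition pbar :: "real \<Rightarrow> nat \<Rightarrow> (real ^ 'n \<Rightarrow> real) \<Rightarrow> real ^ 'n \<Rightarrow> real" where
  "pbar L N p x = p x / (\<Sum>y\<in>grid L N. p y)"

definition mu_disc :: "real \<Rightarrow> nat \<Rightarrow> (real ^ 'n \<Rightarrow> real) \<Rightarrow> (real ^ 'n \<Rightarrow> real) \<Rightarrow> real" where
  "mu_disc L N p f = (\<Sum>x\<in>grid L N. f x * pbar L N p x)"

definition m2_disc :: "real \<Rightarrow> nat \<Rightarrow> (real ^ 'n \<Rightarrow> real) \<Rightarrow> (real ^ 'n \<Rightarrow> real) \<Rightarrow> real" where
  "m2_disc L N p f = (\<Sum>x\<in>grid L N. (f x)^2 * pbar L N p x)"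

definition var_disc :: "real \<Rightarrow> nat \<Rightarrow> (real ^ 'n \<Rightarrow> real) \<Rightarrow> (real ^ 'n \<Rightarrow> real) \<Rightarrow> real" where
  "var_disc L N p f = m2_disc L N p f - (mu_disc L N p f)^2"

definition supnorm :: "real \<Rightarrow> (real ^ 'n \<Rightarrow> real) \<Rightarrow> real" where
  "supnorm L f = Sup ((\<lambda>x. \<bar>f x\<bar>) ` cube L)"

end

(*
  Cut the cube into the N^d closed cells of side h = L/N whose lower corners are the grid
  points.  On the cell of x, |g y p y - g x p x| <= l_g sqrt d h p y + |g|_oo l_p sqrt d h,
  so integrating over the cube shows that the Riemann sum h^d (SUM x. g x p x) is within
  l_g sqrt d h + |g|_oo l_p sqrt d L^(d+1)/N of the integral of g p.  For g = 1 this says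
  that h^d S is within l_p sqrt d L^(d+1)/N of 1, and trading the weight h^d for 1/S costs
  |g|_oo times that error once more.  The variance bound follows by applying the mean bound
  to f and to f^2, which is 2 |f|_oo l_f-Lipschitz, together with
  |mu^2 - mu'^2| <= 2 |f|_oo |mu - mu'|.
*)
theory Submission
  imports Defs
begin

definition grid_cell :: "real \<Rightarrow> nat \<Rightarrow> real ^ 'n \<Rightarrow> (real ^ 'n) set" where
  "grid_cell L N x = cbox x (x + (\<chi> i. L / real N))"

lemma dist_le_in_cbox_cube:
  fixes x y :: "real ^ 'n"
  assumes "y \<in> cbox x (x + (\<chi> i. h))"
  shows "dist y x \<le> sqrt (real CARD('n)) * h"
proof -
  have bounds: "x $ i \<le> y $ i" "y $ i \<le> x $ i + h" for i
    using assms by (auto simp: mem_box_cart)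
  have "h \<ge> 0"
    using bounds[of undefined] by linarith
  have "norm ((y - x) $ i) \<le> norm (((\<chi> i. h) :: real ^ 'n) $ i)" for i
    using bounds[of i] by simp
  then have "norm (y - x) \<le> norm ((\<chi> i. h) :: real ^ 'n)"
    by (rule norm_le_componentwise_cart)
  also have "\<dots> = sqrt (real CARD('n)) * h"
    using \<open>h \<ge> 0\<close> by (simp add: norm_vec_def L2_set_def real_sqrt_mult)
  finally show ?thesis
    by (simp add: dist_norm)
qed

lemma finite_grid: "finite (grid L N :: (real ^ 'n) set)"
proof -
  have "(grid L N :: (real ^ 'n) set)
      \<subseteq> (\<lambda>k. \<chi> i. L / real N * real (k i)) ` (UNIV \<rightarrow>\<^sub>E {..<N})"
  proof
    fix x :: "real ^ 'n"
    assume "x \<in> grid L N"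
    then have "\<forall>i. \<exists>k. k < N \<and> x $ i = L / real N * real k"
      by (auto simp: grid_def)
    then obtain k where k: "\<And>i. k i < N \<and> x $ i = L / real N * real (k i)"
      by metis
    then have "x = (\<chi> i. L / real N * real (k i))"
      by (simp add: vec_eq_iff)
    with k show "x \<in> (\<lambda>k. \<chi> i. L / real N * real (k i)) ` (UNIV \<rightarrow>\<^sub>E {..<N})"
      by (intro image_eqI[of _ _ "restrict k UNIV"]) auto
  qed
  then show ?thesis
    by (rule finite_subset) (simp add: finite_PiE)
qed

lemma grid_index_exists:
  assumes "L > 0" "N \<ge> 1" "0 \<le> t" "t \<le> L"
  shows "\<exists>k<N. L / real N * real k \<le> t \<and> t \<le> L / real N * real k + L / real N"
proof -
  define h where "h = L / real N"
  have h: "h > 0" "h * real N = L"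
    using assms by (auto simp: h_def)
  define k where "k = min (nat \<lfloor>t / h\<rfloor>) (N - 1)"
  have "h * real k \<le> t \<and> t \<le> h * real k + h"
  proof (cases "nat \<lfloor>t / h\<rfloor> \<le> N - 1")
    case True
    then have "real k = \<lfloor>t / h\<rfloor>"
      using assms h by (simp add: k_def)
    then have "real k \<le> t / h" "t / h \<le> real k + 1"
      by linarith+
    then show ?thesis
      using h by (simp add: field_simps)
  next
    case False
    then have "N \<le> nat \<lfloor>t / h\<rfloor>"
      by linarith
    then have "real N \<le> t / h"
      using assms h by (simp add: le_nat_iff le_floor_iff)
    then have "t = L"
      using assms h by (simp add: field_simps)
    moreover have "real k = real N - 1"
      using False assms by (simp add: k_def)
    ultimately have "h * real k + h = t"
      using h by (simp add: right_diff_distrib)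
    then show ?thesis
      using h by linarith
  qed
  moreover have "k < N"
    using assms by (simp add: k_def)
  ultimately show ?thesis
    unfolding h_def by blast
qed

lemma grid_index_unique:
  fixes h t :: real and k k' :: nat
  assumes "h * k < t" "t < h * k + h" "h * k' < t" "t < h * k' + h"
  shows "k = k'"
proof -
  have "h > 0"
    using assms by linarith
  have "h * k < h * (k' + 1)" "h * k' < h * (k + 1)"
    using assms by (simp_all add: algebra_simps)
  then have "k < k' + 1" "k' < k + 1"
    using \<open>h > 0\<close> by (simp_all only: mult_less_cancel_left_pos of_nat_less_iff)
  then show ?thesis
    by linarith
qed

lemma grid_cell_anchor: "0 \<le> L \<Longrightarrow> x \<in> grid_cell L N x"
  by (simp add: grid_cell_def mem_box_cart)

lemma inj_grid_cell: "0 \<le> L \<Longrightarrow> inj (grid_cell L N)"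
  by (rule injI) (metis grid_cell_anchor eq_cbox grid_cell_def empty_iff)

lemma content_grid_cell:
  "0 \<le> L \<Longrightarrow> measure lborel (grid_cell L N x :: (real ^ 'n) set) = (L / real N) ^ CARD('n)"
  using grid_cell_anchor[of L x N] unfolding grid_cell_def
  by (subst content_cbox_cart) auto

lemma grid_cell_subset_cube:
  fixes x :: "real ^ 'n"
  assumes "L > 0" "x \<in> grid L N"
  shows "grid_cell L N x \<subseteq> cube L"
proof
  fix y
  assume y: "y \<in> grid_cell L N x"
  show "y \<in> cube L"
    unfolding cube_def mem_box_cart
  proof
    fix i
    obtain k where k: "k < N" "x $ i = L / real N * real k"
      using assms(2) unfolding grid_def by blast
    have "x $ i + L / real N = L / real N * (real k + 1)"
      using k by (simp add: distrib_left)
    also have "\<dots> \<le> L / real N * real N"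
      using k assms(1) by (intro mult_left_mono) auto
    also have "\<dots> = L"
      using k by simp
    finally have "x $ i + L / real N \<le> L" .
    moreover have "0 \<le> x $ i"
      using k assms(1) by simp
    moreover have "x $ i \<le> y $ i" "y $ i \<le> x $ i + L / real N"
      using y by (auto simp: grid_cell_def mem_box_cart)
    ultimately show "(0 :: real ^ 'n) $ i \<le> y $ i \<and> y $ i \<le> (\<chi> i. L) $ i"
      by simp
  qed
qed

lemma grid_subset_cube: "L > 0 \<Longrightarrow> grid L N \<subseteq> cube L"
  using grid_cell_anchor grid_cell_subset_cube by (metis less_imp_le subset_iff)

lemma cube_subset_Union_grid_cells:
  assumes "L > 0" "N \<ge> 1"
  shows "cube L \<subseteq> (\<Union>x\<in>grid L N. grid_cell L N x)"
proof
  fix y :: "real ^ 'n"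
  assume "y \<in> cube L"
  then have "\<forall>i. \<exists>k<N. L / real N * real k \<le> y $ i \<and> y $ i \<le> L / real N * real k + L / real N"
    using assms grid_index_exists unfolding cube_def mem_box_cart by simp
  then obtain k where k: "\<And>i. k i < N"
      "\<And>i. L / real N * real (k i) \<le> y $ i \<and> y $ i \<le> L / real N * real (k i) + L / real N"
    by metis
  define x :: "real ^ 'n" where "x = (\<chi> i. L / real N * real (k i))"
  have "x \<in> grid L N"
    using k(1) by (auto simp: grid_def x_def)
  moreover have "y \<in> grid_cell L N x"
    using k(2) by (simp add: grid_cell_def mem_box_cart x_def)
  ultimately show "y \<in> (\<Union>x\<in>grid L N. grid_cell L N x)"
    by blast
qed

lemma interior_grid_cells_disjoint:
  assumes "x \<in> grid L N" "x' \<in> grid L N" "x \<noteq> x'"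
  shows "interior (grid_cell L N x) \<inter> interior (grid_cell L N x') = {}"
proof (rule ccontr)
  assume "interior (grid_cell L N x) \<inter> interior (grid_cell L N x') \<noteq> {}"
  then obtain y where
      y: "y \<in> box x (x + (\<chi> i. L / real N))" "y \<in> box x' (x' + (\<chi> i. L / real N))"
    by (auto simp: grid_cell_def)
  obtain i where "x $ i \<noteq> x' $ i"
    using assms(3) by (auto simp: vec_eq_iff)
  moreover obtain k k' where k: "x $ i = L / real N * real k" "x' $ i = L / real N * real k'"
    using assms(1,2) unfolding grid_def by blast
  moreover have "x $ i < y $ i" "y $ i < x $ i + L / real N"
    and "x' $ i < y $ i" "y $ i < x' $ i + L / real N"
    using y unfolding mem_box_cart by auto
  then have "k = k'"
    unfolding k by (rule grid_index_unique)
  ultimately show False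
    by simp
qed

lemma grid_cells_division_of_cube:
  assumes "L > 0" "N \<ge> 1"
  shows "grid_cell L N ` grid L N division_of cube L"
proof (rule division_ofI)
  show "finite (grid_cell L N ` grid L N)"
    by (simp add: finite_grid)
  show "\<Union> (grid_cell L N ` grid L N) = cube L"
    using assms cube_subset_Union_grid_cells grid_cell_subset_cube by blast
  fix K
  assume "K \<in> grid_cell L N ` grid L N"
  then obtain x where "x \<in> grid L N" "K = grid_cell L N x"
    by blast
  then show "K \<subseteq> cube L" "K \<noteq> {}" "\<exists>a b. K = cbox a b"
    using assms grid_cell_subset_cube grid_cell_anchor[of L x N] by (auto simp: grid_cell_def)
  fix K'
  assume "K' \<in> grid_cell L N ` grid L N" "K \<noteq> K'"
  then show "interior K \<inter> interior K' = {}"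
    using \<open>x \<in> grid L N\<close> \<open>K = grid_cell L N x\<close> interior_grid_cells_disjoint by blast
qed

lemma grid_riemann_sum_error:
  fixes \<phi> F :: "real ^ 'n \<Rightarrow> real"
  assumes "L > 0" "N \<ge> 1"
    and \<phi>_int: "\<phi> integrable_on cube L" and F_int: "F integrable_on cube L"
    and local_bound: "\<And>x y. x \<in> grid L N \<Longrightarrow> y \<in> grid_cell L N x \<Longrightarrow> \<bar>\<phi> y - \<phi> x\<bar> \<le> F y"
  shows "\<bar>integral (cube L) \<phi> - (L / real N) ^ CARD('n) * (\<Sum>x\<in>grid L N. \<phi> x)\<bar>
           \<le> integral (cube L) F"
proof -
  have division: "grid_cell L N ` grid L N division_of cube L"
    using assms(1,2) by (rule grid_cells_division_of_cube)
  have inj: "inj_on (grid_cell L N) (grid L N)"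
    using assms(1) inj_grid_cell by (metis inj_on_subset subset_UNIV less_imp_le)
  have integral_sum_cells:
    "integral (cube L) g = (\<Sum>x\<in>grid L N. integral (grid_cell L N x) g)"
    if "g integrable_on cube L" for g :: "real ^ 'n \<Rightarrow> real"
    using integral_combine_division_topdown[OF that division] sum.reindex[OF inj] by simp
  have cell_error: "\<bar>integral (grid_cell L N x) \<phi> - (L / real N) ^ CARD('n) * \<phi> x\<bar>
      \<le> integral (grid_cell L N x) F"
    if x: "x \<in> grid L N" for x
  proof -
    have "grid_cell L N x \<subseteq> cube L"
      using assms(1) x by (rule grid_cell_subset_cube)
    then have \<phi>_int_cell: "\<phi> integrable_on grid_cell L N x"
      and F_int_cell: "F integrable_on grid_cell L N x"
      using \<phi>_int F_int unfolding grid_cell_def by (auto intro: integrable_on_subcbox)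
    have const_int: "(\<lambda>y. \<phi> x) integrable_on grid_cell L N x"
      unfolding grid_cell_def by (rule integrable_const)
    have "integral (grid_cell L N x) \<phi> - (L / real N) ^ CARD('n) * \<phi> x
        = integral (grid_cell L N x) (\<lambda>y. \<phi> y - \<phi> x)"
      using integral_diff[OF \<phi>_int_cell const_int] content_grid_cell[of L N x] assms(1)
      by (simp add: grid_cell_def)
    also have "\<bar>\<dots>\<bar> \<le> integral (grid_cell L N x) F"
      using integral_norm_bound_integral[OF integrable_diff[OF \<phi>_int_cell const_int]
          F_int_cell] local_bound[OF x]
      by simp
    finally show ?thesis .
  qed
  have "integral (cube L) \<phi> - (L / real N) ^ CARD('n) * (\<Sum>x\<in>grid L N. \<phi> x)
      = (\<Sum>x\<in>grid L N. integral (grid_cell L N x) \<phi> - (L / real N) ^ CARD('n) * \<phi> x)"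
    by (simp add: integral_sum_cells[OF \<phi>_int] sum_subtractf sum_distrib_left)
  also have "\<bar>\<dots>\<bar> \<le> (\<Sum>x\<in>grid L N. integral (grid_cell L N x) F)"
    by (rule order_trans[OF sum_abs sum_mono]) (rule cell_error)
  also have "\<dots> = integral (cube L) F"
    by (simp add: integral_sum_cells[OF F_int])
  finally show ?thesis .
qed

lemma abs_diff_normalized_le:
  fixes I T S c e A M :: real
  assumes "\<bar>I - c * T\<bar> \<le> e" "\<bar>1 - c * S\<bar> \<le> A" "\<bar>T\<bar> \<le> M * S" "S > 0"
  shows "\<bar>I - T / S\<bar> \<le> e + M * A"
proof -
  have "\<bar>T / S\<bar> \<le> M"
    using assms(3,4) by (simp add: abs_div pos_divide_le_eq)
  then have "0 \<le> M"
    by (meson abs_ge_zero order_trans)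
  have "\<bar>c * T - T / S\<bar> = \<bar>T / S\<bar> * \<bar>1 - c * S\<bar>"
    using assms(4) by (simp add: abs_mult[symmetric] field_simps)
  also have "\<dots> \<le> M * A"
    using \<open>\<bar>T / S\<bar> \<le> M\<close> \<open>0 \<le> M\<close> assms(2) by (intro mult_mono) auto
  finally show ?thesis
    using assms(1) by linarith
qed

lemma abs_diff_variance_le:
  fixes m m' \<mu> \<mu>' e e' M :: real
  assumes "\<bar>m - m'\<bar> \<le> e'" "\<bar>\<mu> - \<mu>'\<bar> \<le> e" "\<bar>\<mu>\<bar> \<le> M" "\<bar>\<mu>'\<bar> \<le> M"
  shows "\<bar>(m - \<mu>\<^sup>2) - (m' - \<mu>'\<^sup>2)\<bar> \<le> e' + 2 * M * e"
proof -
  have "\<bar>\<mu>\<^sup>2 - \<mu>'\<^sup>2\<bar> = \<bar>\<mu> + \<mu>'\<bar> * \<bar>\<mu> - \<mu>'\<bar>"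
    by (simp add: abs_mult[symmetric] power2_eq_square algebra_simps)
  also have "\<dots> \<le> (2 * M) * e"
    using assms(2-4) by (intro mult_mono) auto
  finally show ?thesis
    using assms(1) by linarith
qed

lemma lipschitz_on_power2:
  fixes f :: "'a::metric_space \<Rightarrow> real"
  assumes "lipschitz_on K S f" "\<And>x. x \<in> S \<Longrightarrow> \<bar>f x\<bar> \<le> M" "0 \<le> M"
  shows "lipschitz_on (2 * M * K) S (\<lambda>x. (f x)\<^sup>2)"
proof (rule lipschitz_onI)
  show "0 \<le> 2 * M * K"
    using assms(3) lipschitz_on_nonneg[OF assms(1)] by simp
  fix x y
  assume "x \<in> S" "y \<in> S"
  have "dist ((f x)\<^sup>2) ((f y)\<^sup>2) = \<bar>f x + f y\<bar> * dist (f x) (f y)"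
    by (simp add: dist_real_def abs_mult[symmetric] power2_eq_square algebra_simps)
  also have "\<dots> \<le> (2 * M) * (K * dist x y)"
    using assms(2)[OF \<open>x \<in> S\<close>] assms(2)[OF \<open>y \<in> S\<close>]
      lipschitz_onD[OF assms(1) \<open>x \<in> S\<close> \<open>y \<in> S\<close>]
    by (intro mult_mono) auto
  finally show "dist ((f x)\<^sup>2) ((f y)\<^sup>2) \<le> 2 * M * K * dist x y"
    by (simp add: mult.assoc)
qed

lemma abs_le_supnorm: "bounded (f ` cube L) \<Longrightarrow> x \<in> cube L \<Longrightarrow> \<bar>f x\<bar> \<le> supnorm L f"
  unfolding supnorm_def
  by (rule cSup_upper) (auto simp: bounded_iff bdd_above_def)

lemma supnorm_nonneg: "bounded (f ` cube L) \<Longrightarrow> 0 \<le> L \<Longrightarrow> 0 \<le> supnorm L f"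
  using abs_le_supnorm[of f L 0] by (force simp: cube_def mem_box_cart)

locale lipschitz_density =
  fixes L :: real and N :: nat and p :: "real ^ 'n \<Rightarrow> real" and lp :: real
  assumes L_pos: "L > 0" and N_ge_1: "N \<ge> 1"
    and density_nonneg: "\<And>x. x \<in> cube L \<Longrightarrow> 0 \<le> p x"
    and density_has_integral_1: "(p has_integral 1) (cube L)"
    and density_lipschitz: "lipschitz_on lp (cube L) p"
begin

lemma integrable_mult_density:
  assumes "continuous_on (cube L) g"
  shows "(\<lambda>x. g x * p x) integrable_on cube L"
  using assms lipschitz_on_continuous_on[OF density_lipschitz] unfolding cube_def
  by (intro integrable_continuous continuous_intros)

lemma abs_mult_density_le: "x \<in> cube L \<Longrightarrow> \<bar>g x\<bar> \<le> M \<Longrightarrow> \<bar>g x * p x\<bar> \<le> M * p x"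
  using density_nonneg[of x] by (simp add: abs_mult mult_right_mono)

lemma weighted_riemann_sum_error:
  assumes g_bound: "\<And>x. x \<in> cube L \<Longrightarrow> \<bar>g x\<bar> \<le> M"
    and g_lipschitz: "lipschitz_on K (cube L) g"
  shows "\<bar>integral (cube L) (\<lambda>x. g x * p x)
           - (L / real N) ^ CARD('n) * (\<Sum>x\<in>grid L N. g x * p x)\<bar>
           \<le> K * sqrt (real CARD('n)) * (L / real N)
             + M * (lp * sqrt (real CARD('n)) * L ^ (CARD('n) + 1) / real N)"
proof -
  define \<delta> where "\<delta> = sqrt (real CARD('n)) * (L / real N)"
  \<comment> \<open>Keeping the factor \<open>p y\<close> makes the first error term integrate to \<open>K * \<delta>\<close>, free of \<open>L ^ d\<close>.\<close>
  define F where "F y = K * \<delta> * p y + M * lp * \<delta>" for y :: "real ^ 'n"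
  have "(F has_integral K * \<delta> * 1 + measure lborel (cube L :: (real ^ 'n) set) *\<^sub>R (M * lp * \<delta>))
      (cube L)"
    unfolding F_def using density_has_integral_1 unfolding cube_def
    by (intro has_integral_add has_integral_mult_right has_integral_const)
  moreover have "measure lborel (cube L :: (real ^ 'n) set) = L ^ CARD('n)"
    using L_pos
    by (subst cube_def, subst content_cbox_cart) (auto simp: cube_def interval_ne_empty_cart)
  ultimately have F_integral:
    "(F has_integral K * \<delta> + M * (lp * sqrt (real CARD('n)) * L ^ (CARD('n) + 1) / real N))
      (cube L)"
    by (simp add: \<delta>_def mult_ac)
  have local_bound: "\<bar>g y * p y - g x * p x\<bar> \<le> F y"
    if x: "x \<in> grid L N" and y: "y \<in> grid_cell L N x" for x y
  proof -
    have "x \<in> cube L" "y \<in> cube L"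
      using x y grid_subset_cube grid_cell_subset_cube L_pos by blast+
    have "dist y x \<le> \<delta>"
      using y unfolding \<delta>_def grid_cell_def by (rule dist_le_in_cbox_cube)
    then have "K * dist y x \<le> K * \<delta>" "lp * dist y x \<le> lp * \<delta>"
      using lipschitz_on_nonneg[OF g_lipschitz] lipschitz_on_nonneg[OF density_lipschitz]
      by (simp_all add: mult_left_mono)
    then have g_close: "\<bar>g y - g x\<bar> \<le> K * \<delta>" and p_close: "\<bar>p y - p x\<bar> \<le> lp * \<delta>"
      using lipschitz_onD[OF g_lipschitz \<open>y \<in> cube L\<close> \<open>x \<in> cube L\<close>]
        lipschitz_onD[OF density_lipschitz \<open>y \<in> cube L\<close> \<open>x \<in> cube L\<close>]
      by (simp_all add: dist_real_def)
    have "0 \<le> p y"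
      using \<open>y \<in> cube L\<close> by (rule density_nonneg)
    have "\<bar>g y * p y - g x * p x\<bar> = \<bar>(g y - g x) * p y + g x * (p y - p x)\<bar>"
      by (simp add: algebra_simps)
    also have "\<dots> \<le> \<bar>g y - g x\<bar> * p y + \<bar>g x\<bar> * \<bar>p y - p x\<bar>"
      using abs_triangle_ineq[of "(g y - g x) * p y" "g x * (p y - p x)"] \<open>0 \<le> p y\<close>
      by (simp add: abs_mult)
    also have "\<dots> \<le> K * \<delta> * p y + M * (lp * \<delta>)"
      using g_close p_close g_bound[OF \<open>x \<in> cube L\<close>] \<open>0 \<le> p y\<close>
      by (intro add_mono mult_mono) auto
    also have "\<dots> = F y"
      by (simp add: F_def)
    finally show ?thesis .
  qed
  have "\<bar>integral (cube L) (\<lambda>x. g x * p x)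
        - (L / real N) ^ CARD('n) * (\<Sum>x\<in>grid L N. g x * p x)\<bar> \<le> integral (cube L) F"
    using L_pos N_ge_1 integrable_mult_density[OF lipschitz_on_continuous_on[OF g_lipschitz]]
      has_integral_integrable[OF F_integral] local_bound
    by (rule grid_riemann_sum_error)
  then show ?thesis
    using integral_unique[OF F_integral] by (simp add: \<delta>_def mult.assoc)
qed

end

locale discretized_density = lipschitz_density L N p lp
  for L N and p :: "real ^ 'n \<Rightarrow> real" and lp +
  assumes density_pos_on_grid: "\<exists>x\<in>grid L N. 0 < p x"
begin

lemma sum_grid_density_pos: "0 < (\<Sum>x\<in>grid L N. p x)"
proof -
  obtain x0 where x0: "x0 \<in> grid L N" "0 < p x0"
    using density_pos_on_grid by blast
  have "0 \<le> p x" if "x \<in> grid L N" for x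
    using grid_subset_cube[OF L_pos] that by (intro density_nonneg) blast
  then have "p x0 \<le> (\<Sum>x\<in>grid L N. p x)"
    using x0 by (intro member_le_sum finite_grid) auto
  then show ?thesis
    using x0 by linarith
qed

lemma mu_disc_eq: "mu_disc L N p g = (\<Sum>x\<in>grid L N. g x * p x) / (\<Sum>x\<in>grid L N. p x)"
  by (simp add: mu_disc_def pbar_def sum_divide_distrib)

lemma abs_mu_disc_le:
  assumes "\<And>x. x \<in> cube L \<Longrightarrow> \<bar>g x\<bar> \<le> M"
  shows "\<bar>mu_disc L N p g\<bar> \<le> M"
proof -
  have "\<bar>\<Sum>x\<in>grid L N. g x * p x\<bar> \<le> (\<Sum>x\<in>grid L N. M * p x)"
    using assms grid_subset_cube[OF L_pos]
    by (intro order_trans[OF sum_abs sum_mono] abs_mult_density_le) auto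
  then show ?thesis
    using sum_grid_density_pos
    by (simp add: mu_disc_eq abs_div pos_divide_le_eq sum_distrib_left[symmetric])
qed

lemma abs_mu_cont_le:
  assumes "continuous_on (cube L) g" "\<And>x. x \<in> cube L \<Longrightarrow> \<bar>g x\<bar> \<le> M"
  shows "\<bar>mu_cont L p g\<bar> \<le> M"
proof -
  have "norm (integral (cube L) (\<lambda>x. g x * p x)) \<le> integral (cube L) (\<lambda>x. M * p x)"
    using integrable_mult_density[OF assms(1)]
      has_integral_integrable[OF has_integral_mult_right[OF density_has_integral_1]]
    by (rule integral_norm_bound_integral) (simp add: abs_mult_density_le assms(2))
  also have "\<dots> = M"
    using integral_unique[OF has_integral_mult_right[OF density_has_integral_1]] by simp
  finally show ?thesis
    by (simp add: mu_cont_def)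
qed

lemma abs_mu_cont_diff_mu_disc_le:
  assumes g_bound: "\<And>x. x \<in> cube L \<Longrightarrow> \<bar>g x\<bar> \<le> M"
    and g_lipschitz: "lipschitz_on K (cube L) g"
  shows "\<bar>mu_cont L p g - mu_disc L N p g\<bar>
           \<le> 2 * M * (lp * sqrt (real CARD('n)) * L ^ (CARD('n) + 1) / real N)
             + K * sqrt (real CARD('n)) * (L / real N)"
proof -
  let ?A = "lp * sqrt (real CARD('n)) * L ^ (CARD('n) + 1) / real N"
  let ?c = "(L / real N) ^ CARD('n)"
  have total_mass: "\<bar>1 - ?c * (\<Sum>x\<in>grid L N. p x)\<bar> \<le> ?A"
    using weighted_riemann_sum_error[of "\<lambda>_. 1" 1 0] lipschitz_on_constant[of "cube L" 1]
      integral_unique[OF density_has_integral_1]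
    by simp
  have riemann: "\<bar>integral (cube L) (\<lambda>x. g x * p x) - ?c * (\<Sum>x\<in>grid L N. g x * p x)\<bar>
      \<le> K * sqrt (real CARD('n)) * (L / real N) + M * ?A"
    using g_bound g_lipschitz by (rule weighted_riemann_sum_error)
  have "\<bar>\<Sum>x\<in>grid L N. g x * p x\<bar> \<le> M * (\<Sum>x\<in>grid L N. p x)"
    using abs_mu_disc_le[OF g_bound] sum_grid_density_pos
    by (simp add: mu_disc_eq abs_div pos_divide_le_eq)
  then have "\<bar>mu_cont L p g - mu_disc L N p g\<bar>
      \<le> (K * sqrt (real CARD('n)) * (L / real N) + M * ?A) + M * ?A"
    unfolding mu_cont_def mu_disc_eq
    using riemann total_mass sum_grid_density_pos by (intro abs_diff_normalized_le)
  also have "\<dots> = 2 * M * ?A + K * sqrt (real CARD('n)) * (L / real N)"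
    by algebra
  finally show ?thesis .
qed

end

theorem mainTheorem12:
  fixes p f :: "real ^ 'n \<Rightarrow> real" and L lp lf :: real and N :: nat
  assumes "L > 0" and "N \<ge> 1"
    and "\<forall>x\<in>cube L. p x \<ge> 0"
    and "(p has_integral 1) (cube L)"
    and "lipschitz_on lp (cube L) p"
    and "\<exists>x\<in>grid L N. p x > 0"
    and "bounded (f ` cube L)"
    and "lipschitz_on lf (cube L) f"
  shows "(\<bar>mu_cont L p f - mu_disc L N p f\<bar>
           \<le> 2 * supnorm L f * (lp * sqrt (real CARD('n)) * L ^ (CARD('n) + 1) / real N)
             + lf * sqrt (real CARD('n)) * (L / real N)) \<and>
         (\<bar>var_cont L p f - var_disc L N p f\<bar>
           \<le> 6 * (supnorm L f)^2 * (lp * sqrt (real CARD('n)) * L ^ (CARD('n) + 1) / real N)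
             + 4 * supnorm L f * lf * sqrt (real CARD('n)) * (L / real N))"
proof -
  interpret discretized_density L N p lp
    using assms(1-6) by unfold_locales auto
  let ?M = "supnorm L f"
  let ?A = "lp * sqrt (real CARD('n)) * L ^ (CARD('n) + 1) / real N"
  let ?s = "sqrt (real CARD('n))" and ?h = "L / real N"
  have f_bound: "\<And>x. x \<in> cube L \<Longrightarrow> \<bar>f x\<bar> \<le> ?M"
    using assms(7) by (rule abs_le_supnorm)
  have f2_bound: "\<bar>(f x)\<^sup>2\<bar> \<le> ?M\<^sup>2" if "x \<in> cube L" for x
    using power_mono[OF f_bound[OF that] abs_ge_zero, of 2] by simp
  have f2_lipschitz: "lipschitz_on (2 * ?M * lf) (cube L) (\<lambda>x. (f x)\<^sup>2)"
    using assms(8) f_bound supnorm_nonneg[OF assms(7)] assms(1)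
    by (intro lipschitz_on_power2) auto
  have mean: "\<bar>mu_cont L p f - mu_disc L N p f\<bar> \<le> 2 * ?M * ?A + lf * ?s * ?h"
    using f_bound assms(8) by (rule abs_mu_cont_diff_mu_disc_le)
  have "\<bar>m2_cont L p f - m2_disc L N p f\<bar> \<le> 2 * ?M\<^sup>2 * ?A + 2 * ?M * lf * ?s * ?h"
    using abs_mu_cont_diff_mu_disc_le[OF f2_bound f2_lipschitz]
    by (simp add: m2_cont_def m2_disc_def mu_cont_def mu_disc_def)
  then have "\<bar>var_cont L p f - var_disc L N p f\<bar>
      \<le> (2 * ?M\<^sup>2 * ?A + 2 * ?M * lf * ?s * ?h) + 2 * ?M * (2 * ?M * ?A + lf * ?s * ?h)"
    unfolding var_cont_def var_disc_def
    using mean abs_mu_cont_le[OF lipschitz_on_continuous_on[OF assms(8)] f_bound]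
      abs_mu_disc_le[OF f_bound]
    by (rule abs_diff_variance_le)
  also have "\<dots> = 6 * ?M\<^sup>2 * ?A + 4 * ?M * lf * ?s * ?h"
    by (simp add: power2_eq_square algebra_simps)
  finally show ?thesis
    using mean by (intro conjI)
qed

end
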